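(* Let $ABC$ be a triangle with incenter $I$ and orthocenter $H$, and let $H_A, H_B, H_C$ be the orthocenters of the triangles $BIC$, $CIA$, $AIB$ respectively. Let $O_a, O_b, O_c$ be the circumcenters of the triangles $H_ABC$, $H_BCA$, $H_CBA$ respectively (the triangle $O_aO_bO_c$ is the Fuhrmann triangle), and let $O_A, O_B, O_C$ be the circumcenters of the triangles $AH_BH_C$, $BH_CH_A$, $CH_AH_B$ respectively (the triangle $O_AO_BO_C$ is called the Anti-Fuhrmann triangle). Then the triangle $O_AO_BO_C$ is the image of the triangle $O_aO_bO_c$ under the point reflection in the midpoint of $HI$, with $O_a \mapsto O_A$, $O_b\mapsto O_B$, $O_c\mapsto O_C$. *)

theory Defs
  imports "HOL-Analysis.Analysis"
begin

text \<open>Points of the Euclidean plane are modelled as complex numbers.\<close>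

definition orthocenter :: "complex \<Rightarrow> complex \<Rightarrow> complex \<Rightarrow> complex" where
  "orthocenter A B C = (THE H. inner (H - A) (B - C) = 0 \<and> inner (H - B) (C - A) = 0
                              \<and> inner (H - C) (A - B) = 0)"

definition circumcenter :: "complex \<Rightarrow> complex \<Rightarrow> complex \<Rightarrow> complex" where
  "circumcenter A B C = (THE P. dist P A = dist P B \<and> dist P B = dist P C)"

text \<open>Incenter via its barycentric coordinates (a : b : c), a, b, c the side lengths.\<close>
definition incenter :: "complex \<Rightarrow> complex \<Rightarrow> complex \<Rightarrow> complex" where
  "incenter A B C = (dist B C *\<^sub>R A + dist C A *\<^sub>R B + dist A B *\<^sub>R C)
                      /\<^sub>R (dist B C + dist C A + dist A B)"

definition point_reflection :: "complex \<Rightarrow> complex \<Rightarrow> complex" where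
  "point_reflection M X = 2 *\<^sub>R M - X"

end

theory Submission
  imports Defs
begin

text \<open>Scale the circumcircle to the unit circle and write A = x^2, B = y^2, C = z^2, with
the signs of the square roots chosen so that -yz, -zx, -xy are the midpoints of the arcs BC, CA, AB
not containing the opposite vertex; then I = -(xy + yz + zx) and H = x^2 + y^2 + z^2.
By the incenter-excenter lemma the circumcenter of BIC is the arc midpoint -yz, so Sylvester's
relation H = A + B + C - 2O gives H_A = y^2 + z^2 + yz - xy - xz. The points H_A, B, C lie
at distance |y + z| from O_a = y^2 + z^2 + yz, and A, H_B, H_C at distance |2x + y + z|
from O_A = x^2 - xy - xz - 2yz. Hence O_a + O_A = H + I, and likewise at the other vertices.\<close>

section \<open>Circumcenter and orthocenter in the complex plane\<close>

lemma collinear_iff_Im_cnj_mult: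
  fixes p q s :: complex
  shows "collinear {p, q, s} \<longleftrightarrow> Im (cnj (q - p) * (s - p)) = 0"
proof -
  have "collinear {p, q, s} \<longleftrightarrow> collinear {q, p, s}"
    by (simp add: insert_commute)
  also have "\<dots> \<longleftrightarrow> collinear {0, q - p, s - p}"
    by (simp add: collinear_3)
  also have "\<dots> \<longleftrightarrow> (s - p) / (q - p) \<in> \<real>"
    by (rule collinear_iff_Reals)
  also have "\<dots> \<longleftrightarrow> Im (cnj (q - p) * (s - p)) = 0"
    by (cases "q = p") (auto simp: complex_is_Real_iff Im_divide' algebra_simps)
  finally show ?thesis .
qed

lemma collinear_similarity_iff:
  fixes c p q s :: complex and r :: real
  assumes "r \<noteq> 0"
  shows "collinear {c + of_real r * p, c + of_real r * q, c + of_real r * s} \<longleftrightarrow> collinear {p, q, s}"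
proof -
  have "cnj (c + of_real r * q - (c + of_real r * p)) * (c + of_real r * s - (c + of_real r * p))
      = of_real (r^2) * (cnj (q - p) * (s - p))"
    by (simp add: algebra_simps power2_eq_square)
  then show ?thesis
    using assms by (simp add: collinear_iff_Im_cnj_mult)
qed

lemma equidistant_distinct_not_collinear:
  fixes c p q s :: "'a::euclidean_space"
  assumes "dist c p = dist c q" "dist c q = dist c s" "p \<noteq> q" "q \<noteq> s" "p \<noteq> s"
  shows "\<not> collinear {p, q, s}"
proof
  have no_middle: False
    if "between (a, b) m" "dist c a = dist c b" "dist c m = dist c b" "m \<noteq> a" "m \<noteq> b" for a b m
  proof (rule different_norm_3_collinear_points)
    show "m - c \<in> open_segment (a - c) (b - c)"
      using that(1,4,5) closed_segment_translation_eq[of "- c" m a b]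
      by (simp add: between_mem_segment open_segment_def)
    show "norm (a - c) = norm (b - c)" "norm (m - c) = norm (b - c)"
      using that(2,3) by (simp_all add: dist_norm norm_minus_commute)
  qed
  assume "collinear {p, q, s}"
  then consider "between (q, s) p" | "between (s, p) q" | "between (p, q) s"
    unfolding collinear_between_cases by blast
  then show False
    by cases (use assms in \<open>auto intro: no_middle\<close>)
qed

lemma dist_eq_iff_inner_midpoint:
  fixes c p q :: "'a::real_inner"
  shows "dist c p = dist c q \<longleftrightarrow> inner (c - midpoint p q) (q - p) = 0"
proof -
  have "(dist c p)\<^sup>2 - (dist c q)\<^sup>2 = 2 * inner (c - midpoint p q) (q - p)"
    unfolding dist_norm power2_norm_eq_inner midpoint_def
    by (simp add: inner_diff_left inner_diff_right inner_add_left inner_add_right inner_commute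
        algebra_simps)
  then show ?thesis
    by (smt (verit) zero_le_dist power2_eq_iff_nonneg)
qed

lemma orthogonal_to_independent_eq_0:
  fixes d u v :: complex
  assumes "inner d u = 0" "inner d v = 0" and "Im (cnj u * v) \<noteq> 0"
  shows "d = 0"
proof -
  have "Re d * Im (cnj u * v) = Im v * inner d u - Im u * inner d v"
    "Im d * Im (cnj u * v) = Re u * inner d v - Re v * inner d u"
    by (simp_all add: inner_complex_def algebra_simps)
  then show ?thesis
    using assms by (simp add: complex_eq_iff)
qed

lemma circumcenter_eqI:
  fixes c p q s :: complex
  assumes "\<not> collinear {p, q, s}" and "dist c p = dist c q" "dist c q = dist c s"
  shows "circumcenter p q s = c"
  unfolding circumcenter_def
proof (rule the_equality)
  show "dist c p = dist c q \<and> dist c q = dist c s"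
    using assms by simp
next
  fix c' assume c': "dist c' p = dist c' q \<and> dist c' q = dist c' s"
  have bisector: "inner (c' - c) (b - a) = 0" if "dist c' a = dist c' b" "dist c a = dist c b" for a b
    using that dist_eq_iff_inner_midpoint[of c' a b] dist_eq_iff_inner_midpoint[of c a b]
    by (simp add: inner_diff_left)
  have "inner (c' - c) (q - p) = 0" "inner (c' - c) (s - q) = 0"
    using bisector c' assms(2,3) by auto
  then have "inner (c' - c) (q - p) = 0" "inner (c' - c) (s - p) = 0"
    by (simp_all add: inner_diff_right)
  moreover have "Im (cnj (q - p) * (s - p)) \<noteq> 0"
    using assms(1) by (simp add: collinear_iff_Im_cnj_mult)
  ultimately have "c' - c = 0"
    by (rule orthogonal_to_independent_eq_0)
  then show "c' = c"
    by simp
qed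

lemma circumcenter_exists:
  fixes p q s :: complex
  assumes "\<not> collinear {p, q, s}"
  obtains c where "dist c p = dist c q" "dist c q = dist c s"
proof -
  define b where "b = q - p"
  define d where "d = s - p"
  define D where "D = cnj b * d - b * cnj d"
  define t where "t = Im (cnj b * d)"
  have "t \<noteq> 0"
    using assms by (simp add: collinear_iff_Im_cnj_mult t_def b_def d_def)
  moreover have "D = 2 * \<i> * of_real t"
    unfolding D_def t_def by (simp add: complex_eq_iff)
  ultimately have D0: "D \<noteq> 0" "cnj D \<noteq> 0"
    by simp_all
  \<comment> \<open>the circumcenter of the triangle 0, b, d\<close>
  define w where "w = (b * cnj b * d - d * cnj d * b) / D"
  have "(w - b) * cnj (w - b) = w * cnj w" "(w - d) * cnj (w - d) = w * cnj w"
    using D0 unfolding w_def D_def by (simp_all add: field_simps; algebra)+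
  then have "cmod (w - b) = cmod w" "cmod (w - d) = cmod w"
    by (metis complex_norm_square of_real_eq_iff norm_ge_zero power2_eq_iff_nonneg)+
  then show thesis
    by (intro that[of "p + w"]) (simp_all add: dist_norm b_def d_def algebra_simps)
qed

lemma circumcenter_equidistant:
  fixes p q s :: complex
  assumes "\<not> collinear {p, q, s}"
  shows "dist (circumcenter p q s) p = dist (circumcenter p q s) q"
    and "dist (circumcenter p q s) q = dist (circumcenter p q s) s"
  using circumcenter_exists[OF assms] circumcenter_eqI[OF assms] by metis+

lemma
  fixes c p q s :: complex and r :: real
  assumes "dist c p = r" "dist c q = r" "dist c s = r" and "p \<noteq> q" "q \<noteq> s" "p \<noteq> s"
  shows concyclic_not_collinear: "\<not> collinear {p, q, s}"
    and concyclic_circumcenter: "circumcenter p q s = c"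
proof -
  show "\<not> collinear {p, q, s}"
    using assms by (intro equidistant_distinct_not_collinear[of c]) simp_all
  then show "circumcenter p q s = c"
    using assms by (intro circumcenter_eqI) simp_all
qed

lemma circumcenter_swap_last:
  "circumcenter p s q = circumcenter p q s"
  unfolding circumcenter_def by metis

lemma orthocenter_eqI:
  fixes h p q s :: complex
  assumes "\<not> collinear {p, q, s}"
    and "inner (h - p) (q - s) = 0" "inner (h - q) (s - p) = 0" "inner (h - s) (p - q) = 0"
  shows "orthocenter p q s = h"
  unfolding orthocenter_def
proof (rule the_equality)
  show "inner (h - p) (q - s) = 0 \<and> inner (h - q) (s - p) = 0 \<and> inner (h - s) (p - q) = 0"
    using assms by simp
next
  fix h' assume "inner (h' - p) (q - s) = 0 \<and> inner (h' - q) (s - p) = 0 \<and> inner (h' - s) (p - q) = 0"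
  then have "inner (h' - h) (q - s) = 0" "inner (h' - h) (s - p) = 0"
    using assms(2,3) by (simp_all add: inner_diff_left)
  moreover have "Im (cnj (q - s) * (s - p)) \<noteq> 0"
  proof -
    have "Im (cnj (q - s) * (s - p)) = - Im (cnj (q - s) * (p - s))"
      by (simp add: algebra_simps)
    then show ?thesis
      using assms(1) collinear_iff_Im_cnj_mult[of s q p] by (simp add: insert_commute)
  qed
  ultimately have "h' - h = 0"
    by (rule orthogonal_to_independent_eq_0)
  then show "h' = h"
    by simp
qed

lemma orthocenter_conv_circumcenter:
  fixes p q s :: complex
  assumes "\<not> collinear {p, q, s}"
  shows "orthocenter p q s = p + q + s - 2 * circumcenter p q s"
proof (rule orthocenter_eqI[OF assms])
  define c where "c = circumcenter p q s"
  have altitude: "inner (a + b - 2 * c) (a - b) = 0" if "dist c a = dist c b" for a b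
  proof -
    have "inner (a + b - 2 * c) (a - b) = 2 * inner (c - midpoint a b) (b - a)"
      by (simp add: inner_complex_def midpoint_def field_simps)
    then show ?thesis
      using that by (simp add: dist_eq_iff_inner_midpoint)
  qed
  have "dist c q = dist c s" "dist c s = dist c p" "dist c p = dist c q"
    using circumcenter_equidistant[OF assms] unfolding c_def by simp_all
  from this[THEN altitude] have "inner (q + s - 2 * c) (q - s) = 0" "inner (s + p - 2 * c) (s - p) = 0"
    "inner (p + q - 2 * c) (p - q) = 0" .
  then show "inner (p + q + s - 2 * c - p) (q - s) = 0"
    "inner (p + q + s - 2 * c - q) (s - p) = 0"
    "inner (p + q + s - 2 * c - s) (p - q) = 0"
    by (simp_all add: algebra_simps)
qed

section \<open>Invariance under similarities\<close>

lemma dist_similarity: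
  fixes c p q :: complex and r :: real
  shows "dist (c + of_real r * p) (c + of_real r * q) = \<bar>r\<bar> * dist p q"
  by (simp add: dist_norm norm_mult flip: right_diff_distrib)

lemma circumcenter_similarity:
  fixes c p q s :: complex and r :: real
  assumes "r \<noteq> 0" and "\<not> collinear {p, q, s}"
  shows "circumcenter (c + of_real r * p) (c + of_real r * q) (c + of_real r * s)
    = c + of_real r * circumcenter p q s"
proof (rule circumcenter_eqI)
  show "\<not> collinear {c + of_real r * p, c + of_real r * q, c + of_real r * s}"
    using assms by (simp add: collinear_similarity_iff)
  show "dist (c + of_real r * circumcenter p q s) (c + of_real r * p)
      = dist (c + of_real r * circumcenter p q s) (c + of_real r * q)"
    "dist (c + of_real r * circumcenter p q s) (c + of_real r * q)
      = dist (c + of_real r * circumcenter p q s) (c + of_real r * s)"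
    unfolding dist_similarity using circumcenter_equidistant[OF assms(2)] by simp_all
qed

lemma orthocenter_similarity:
  fixes c p q s :: complex and r :: real
  assumes "r \<noteq> 0" and "\<not> collinear {p, q, s}"
  shows "orthocenter (c + of_real r * p) (c + of_real r * q) (c + of_real r * s)
    = c + of_real r * orthocenter p q s"
proof -
  have image: "\<not> collinear {c + of_real r * p, c + of_real r * q, c + of_real r * s}"
    using assms by (simp add: collinear_similarity_iff)
  show ?thesis
    unfolding orthocenter_conv_circumcenter[OF assms(2)] orthocenter_conv_circumcenter[OF image]
      circumcenter_similarity[OF assms]
    by (simp add: algebra_simps)
qed

lemma incenter_similarity:
  fixes c p q s :: complex and r :: real
  assumes "r > 0" and "p \<noteq> q"
  shows "incenter (c + of_real r * p) (c + of_real r * q) (c + of_real r * s)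
    = c + of_real r * incenter p q s"
proof -
  \<comment> \<open>p \<noteq> q keeps the perimeter positive; if p = q = s the definition gives the junk value 0\<close>
  define a b d where "a = dist q s" and "b = dist s p" and "d = dist p q"
  have "a + b + d \<noteq> 0"
    using assms(2) zero_le_dist[of q s] zero_le_dist[of s p] zero_less_dist_iff[of p q]
    unfolding a_def b_def d_def by linarith
  then have sum: "complex_of_real a + of_real b + of_real d \<noteq> 0"
    by (metis of_real_add of_real_eq_0_iff)
  have "incenter (c + of_real r * p) (c + of_real r * q) (c + of_real r * s)
    = (r *\<^sub>R (a *\<^sub>R (c + of_real r * p) + b *\<^sub>R (c + of_real r * q) + d *\<^sub>R (c + of_real r * s)))
      /\<^sub>R (r * (a + b + d))"
    unfolding incenter_def dist_similarity a_def b_def d_def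
    using assms(1) by (simp add: algebra_simps)
  also have "\<dots> = (a *\<^sub>R (c + of_real r * p) + b *\<^sub>R (c + of_real r * q) + d *\<^sub>R (c + of_real r * s))
      /\<^sub>R (a + b + d)"
    using assms(1) by simp
  also have "\<dots> = c + of_real r * ((a *\<^sub>R p + b *\<^sub>R q + d *\<^sub>R s) /\<^sub>R (a + b + d))"
    using sum by (simp add: scaleR_conv_of_real field_simps)
  finally show ?thesis
    unfolding incenter_def a_def b_def d_def .
qed

section \<open>Square-root coordinates on the unit circle\<close>

lemma cnj_eq_inverse_if_norm_1:
  fixes x :: complex
  assumes "cmod x = 1"
  shows "cnj x = inverse x"
  using divide_conv_cnj[OF assms, of 1] by (simp add: field_simps)

lemma dist_power2_unit:
  fixes y z :: complex
  assumes "cmod y = 1" "cmod z = 1"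
  shows "dist (y\<^sup>2) (z\<^sup>2) = 2 * \<bar>Im (y * cnj z)\<bar>"
proof -
  define w where "w = y * cnj z"
  have "y \<noteq> 0" "z \<noteq> 0"
    using assms by auto
  then have "y\<^sup>2 - z\<^sup>2 = y * z * (w - cnj w)"
    using assms unfolding w_def by (simp add: cnj_eq_inverse_if_norm_1 field_simps power2_eq_square)
  also have "\<dots> = y * z * (of_real (2 * Im w) * \<i>)"
    by (simp only: complex_diff_cnj)
  finally show ?thesis
    using assms by (simp add: dist_norm norm_mult abs_mult flip: w_def)
qed

lemma of_real_Im_mult_cnj_unit:
  fixes y z :: complex
  assumes "cmod y = 1" "cmod z = 1"
  shows "of_real (Im (y * cnj z)) = (y / z - z / y) / (2 * \<i>)"
proof -
  have "of_real (Im w) = (w - cnj w) / (2 * \<i>)" for w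
    by (simp add: complex_eq_iff)
  moreover have "y * cnj z - cnj (y * cnj z) = y / z - z / y"
    using assms by (simp add: cnj_eq_inverse_if_norm_1 field_simps)
  ultimately show ?thesis
    by metis
qed

lemma dist_eq_norm_if_diff_eq_unit_mult:
  fixes p q u w :: complex
  assumes "cmod u = 1" and "p - q = u * w"
  shows "dist p q = cmod w"
  using assms by (simp add: dist_norm norm_mult)

locale triangle_square_roots =
  fixes x y z :: complex
  assumes norm_x: "cmod x = 1" and norm_y: "cmod y = 1" and norm_z: "cmod z = 1"
    \<comment> \<open>the choice of square roots that makes -(xy + yz + zx) the incenter, not an excenter\<close>
    and same_sign:
      "(0 < Im (y * cnj z) \<and> 0 < Im (z * cnj x) \<and> 0 < Im (x * cnj y))
     \<or> (Im (y * cnj z) < 0 \<and> Im (z * cnj x) < 0 \<and> Im (x * cnj y) < 0)"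
begin

lemma rotate: "triangle_square_roots y z x"
  using norm_x norm_y norm_z same_sign by unfold_locales auto

lemma nonzero [simp]: "x \<noteq> 0" "y \<noteq> 0" "z \<noteq> 0"
  using norm_x norm_y norm_z by auto

lemma cnj_eq_inverse: "cnj x = inverse x" "cnj y = inverse y" "cnj z = inverse z"
  using norm_x norm_y norm_z by (simp_all add: cnj_eq_inverse_if_norm_1)

lemma Im_mult_cnj_nonzero: "Im (y * cnj z) \<noteq> 0" "Im (z * cnj x) \<noteq> 0" "Im (x * cnj y) \<noteq> 0"
  using same_sign by auto

lemma roots_distinct: "y \<noteq> z" "z \<noteq> x" "x \<noteq> y"
  using Im_mult_cnj_nonzero by (auto simp: complex_mult_cnj)

lemma sum_nonzero: "y + z \<noteq> 0" "z + x \<noteq> 0" "x + y \<noteq> 0"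
  using Im_mult_cnj_nonzero by (auto simp: add_eq_0_iff complex_mult_cnj)

lemma distinct_squares: "y\<^sup>2 \<noteq> z\<^sup>2" "z\<^sup>2 \<noteq> x\<^sup>2" "x\<^sup>2 \<noteq> y\<^sup>2"
  using roots_distinct sum_nonzero by (auto simp: power2_eq_square square_eq_iff)

lemma incenter_eq: "incenter (x\<^sup>2) (y\<^sup>2) (z\<^sup>2) = -(x * y + y * z + z * x)"
proof -
  define t1 t2 t3 where "t1 = Im (y * cnj z)" and "t2 = Im (z * cnj x)" and "t3 = Im (x * cnj y)"
  have barycentric: "of_real t1 * x\<^sup>2 + of_real t2 * y\<^sup>2 + of_real t3 * z\<^sup>2
      = - of_real (t1 + t2 + t3) * (x * y + y * z + z * x)"
    unfolding t1_def t2_def t3_def of_real_add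
      of_real_Im_mult_cnj_unit[OF norm_y norm_z] of_real_Im_mult_cnj_unit[OF norm_z norm_x]
      of_real_Im_mult_cnj_unit[OF norm_x norm_y]
    by (simp add: field_simps) algebra
  obtain \<epsilon> :: real where "\<epsilon> \<noteq> 0" and abs: "\<bar>t1\<bar> = \<epsilon> * t1" "\<bar>t2\<bar> = \<epsilon> * t2" "\<bar>t3\<bar> = \<epsilon> * t3"
  proof -
    from same_sign consider "0 < t1" "0 < t2" "0 < t3" | "t1 < 0" "t2 < 0" "t3 < 0"
      unfolding t1_def t2_def t3_def by blast
    then show thesis
      by cases (auto intro: that[of 1] that[of "-1"])
  qed
  have "t1 + t2 + t3 \<noteq> 0"
    using same_sign unfolding t1_def t2_def t3_def by linarith
  have "incenter (x\<^sup>2) (y\<^sup>2) (z\<^sup>2)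
      = ((2 * \<epsilon>) *\<^sub>R (t1 *\<^sub>R x\<^sup>2 + t2 *\<^sub>R y\<^sup>2 + t3 *\<^sub>R z\<^sup>2)) /\<^sub>R ((2 * \<epsilon>) * (t1 + t2 + t3))"
    unfolding incenter_def dist_power2_unit[OF norm_y norm_z] dist_power2_unit[OF norm_z norm_x]
      dist_power2_unit[OF norm_x norm_y] t1_def[symmetric] t2_def[symmetric] t3_def[symmetric] abs
    by (simp add: algebra_simps)
  also have "\<dots> = (t1 *\<^sub>R x\<^sup>2 + t2 *\<^sub>R y\<^sup>2 + t3 *\<^sub>R z\<^sup>2) /\<^sub>R (t1 + t2 + t3)"
    using \<open>\<epsilon> \<noteq> 0\<close> by simp
  also have "\<dots> = -(x * y + y * z + z * x)"
    using \<open>t1 + t2 + t3 \<noteq> 0\<close> unfolding scaleR_conv_of_real barycentric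
    by (simp del: of_real_add add: mult.assoc[symmetric])
  finally show ?thesis .
qed

lemma double_x_plus_y_plus_z_nonzero: "2 * x + y + z \<noteq> 0"
proof
  assume "2 * x + y + z = 0"
  then have "y + z = - (2 * x)"
    by algebra
  then have "cmod (y + z) = cmod y + cmod z"
    using norm_x norm_y norm_z by (simp add: norm_mult)
  then have "cmod y *\<^sub>R z = cmod z *\<^sub>R y"
    by (simp only: norm_triangle_eq)
  then have "y = z"
    using norm_y norm_z by simp
  then show False
    using roots_distinct by simp
qed

lemma not_collinear_vertices: "\<not> collinear {x\<^sup>2, y\<^sup>2, z\<^sup>2}"
  using distinct_squares norm_x norm_y norm_z
  by (intro concyclic_not_collinear[of 0 _ 1]) (auto simp: norm_power)

lemma orthocenter_vertices: "orthocenter (x\<^sup>2) (y\<^sup>2) (z\<^sup>2) = x\<^sup>2 + y\<^sup>2 + z\<^sup>2"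
proof -
  have "circumcenter (x\<^sup>2) (y\<^sup>2) (z\<^sup>2) = 0"
    using distinct_squares norm_x norm_y norm_z
    by (intro concyclic_circumcenter[of 0 _ 1]) (auto simp: norm_power)
  then show ?thesis
    by (simp add: orthocenter_conv_circumcenter[OF not_collinear_vertices])
qed

lemma
  shows not_collinear_B_I_C: "\<not> collinear {y\<^sup>2, -(x * y + y * z + z * x), z\<^sup>2}"
    and circumcenter_B_I_C: "circumcenter (y\<^sup>2) (-(x * y + y * z + z * x)) (z\<^sup>2) = - (y * z)"
proof -
  define i where "i = -(x * y + y * z + z * x)"
  have on_circle: "dist (- (y * z)) (y\<^sup>2) = cmod (y + z)" "dist (- (y * z)) i = cmod (y + z)"
    "dist (- (y * z)) (z\<^sup>2) = cmod (y + z)"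
    by (rule dist_eq_norm_if_diff_eq_unit_mult[of "- y"];
        simp add: norm_y algebra_simps power2_eq_square)
      (rule dist_eq_norm_if_diff_eq_unit_mult[of x] dist_eq_norm_if_diff_eq_unit_mult[of "- z"];
        simp add: norm_x norm_z i_def algebra_simps power2_eq_square)+
  have "i - y\<^sup>2 = - ((x + y) * (y + z))" "i - z\<^sup>2 = - ((z + x) * (y + z))"
    by (simp_all add: i_def algebra_simps power2_eq_square)
  then have pairwise_distinct: "y\<^sup>2 \<noteq> i" "i \<noteq> z\<^sup>2" "y\<^sup>2 \<noteq> z\<^sup>2"
    using sum_nonzero distinct_squares(1) by auto
  show "\<not> collinear {y\<^sup>2, i, z\<^sup>2}"
    by (rule concyclic_not_collinear[OF on_circle pairwise_distinct])
  show "circumcenter (y\<^sup>2) i (z\<^sup>2) = - (y * z)"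
    by (rule concyclic_circumcenter[OF on_circle pairwise_distinct])
qed

lemma orthocenter_B_I_C:
  "orthocenter (y\<^sup>2) (-(x * y + y * z + z * x)) (z\<^sup>2) = y\<^sup>2 + z\<^sup>2 + y * z - x * y - x * z"
  unfolding orthocenter_conv_circumcenter[OF not_collinear_B_I_C] circumcenter_B_I_C
  by (simp add: algebra_simps)

lemma
  shows not_collinear_HA_B_C: "\<not> collinear {y\<^sup>2 + z\<^sup>2 + y * z - x * y - x * z, y\<^sup>2, z\<^sup>2}"
    and circumcenter_HA_B_C:
      "circumcenter (y\<^sup>2 + z\<^sup>2 + y * z - x * y - x * z) (y\<^sup>2) (z\<^sup>2) = y\<^sup>2 + z\<^sup>2 + y * z"
proof -
  define h c where "h = y\<^sup>2 + z\<^sup>2 + y * z - x * y - x * z" and "c = y\<^sup>2 + z\<^sup>2 + y * z"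
  have on_circle: "dist c h = cmod (y + z)" "dist c (y\<^sup>2) = cmod (y + z)"
    "dist c (z\<^sup>2) = cmod (y + z)"
    by (rule dist_eq_norm_if_diff_eq_unit_mult[of x] dist_eq_norm_if_diff_eq_unit_mult[of z]
        dist_eq_norm_if_diff_eq_unit_mult[of y];
        simp add: norm_x norm_y norm_z h_def c_def algebra_simps power2_eq_square)+
  have "h - y\<^sup>2 = (z - x) * (y + z)" "h - z\<^sup>2 = (y - x) * (y + z)"
    by (simp_all add: h_def algebra_simps power2_eq_square)
  then have pairwise_distinct: "h \<noteq> y\<^sup>2" "y\<^sup>2 \<noteq> z\<^sup>2" "h \<noteq> z\<^sup>2"
    using roots_distinct sum_nonzero distinct_squares(1) by auto
  show "\<not> collinear {h, y\<^sup>2, z\<^sup>2}"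
    by (rule concyclic_not_collinear[OF on_circle pairwise_distinct])
  show "circumcenter h (y\<^sup>2) (z\<^sup>2) = c"
    by (rule concyclic_circumcenter[OF on_circle pairwise_distinct])
qed

lemma
  shows not_collinear_A_HB_HC:
      "\<not> collinear {x\<^sup>2, z\<^sup>2 + x\<^sup>2 + z * x - y * z - y * x, x\<^sup>2 + y\<^sup>2 + x * y - z * x - z * y}"
    and circumcenter_A_HB_HC:
      "circumcenter (x\<^sup>2) (z\<^sup>2 + x\<^sup>2 + z * x - y * z - y * x) (x\<^sup>2 + y\<^sup>2 + x * y - z * x - z * y)
        = x\<^sup>2 - x * y - x * z - 2 * y * z"
proof -
  define hB hC c where "hB = z\<^sup>2 + x\<^sup>2 + z * x - y * z - y * x"
    and "hC = x\<^sup>2 + y\<^sup>2 + x * y - z * x - z * y" and "c = x\<^sup>2 - x * y - x * z - 2 * y * z"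
  have "dist c (x\<^sup>2) = cmod (cnj (2 * x + y + z))"
    using norm_x norm_y norm_z
    by (intro dist_eq_norm_if_diff_eq_unit_mult[of "- (x * y * z)"])
      (simp_all add: norm_mult c_def cnj_eq_inverse field_simps power2_eq_square)
  then have on_circle: "dist c (x\<^sup>2) = cmod (2 * x + y + z)" "dist c hB = cmod (2 * x + y + z)"
    "dist c hC = cmod (2 * x + y + z)"
    by (simp only: complex_mod_cnj)
      (rule dist_eq_norm_if_diff_eq_unit_mult[of "- z"] dist_eq_norm_if_diff_eq_unit_mult[of "- y"];
        simp add: norm_y norm_z c_def hB_def hC_def algebra_simps power2_eq_square)+
  have "hB - x\<^sup>2 = (z - y) * (z + x)" "hC - x\<^sup>2 = (y - z) * (x + y)"
    "hB - hC = (z - y) * (2 * x + y + z)"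
    by (simp_all add: hB_def hC_def algebra_simps power2_eq_square)
  then have pairwise_distinct: "x\<^sup>2 \<noteq> hB" "hB \<noteq> hC" "x\<^sup>2 \<noteq> hC"
    using roots_distinct sum_nonzero double_x_plus_y_plus_z_nonzero by auto
  show "\<not> collinear {x\<^sup>2, hB, hC}"
    by (rule concyclic_not_collinear[OF on_circle pairwise_distinct])
  show "circumcenter (x\<^sup>2) hB hC = c"
    by (rule concyclic_circumcenter[OF on_circle pairwise_distinct])
qed

lemma similar_copy:
  fixes P :: complex and R :: real
  assumes "0 < R"
  defines "\<sigma> \<equiv> \<lambda>w. P + of_real R * w"
  shows "incenter (\<sigma> (x\<^sup>2)) (\<sigma> (y\<^sup>2)) (\<sigma> (z\<^sup>2)) = \<sigma> (-(x * y + y * z + z * x))"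
    and "orthocenter (\<sigma> (x\<^sup>2)) (\<sigma> (y\<^sup>2)) (\<sigma> (z\<^sup>2)) = \<sigma> (x\<^sup>2 + y\<^sup>2 + z\<^sup>2)"
    and "orthocenter (\<sigma> (y\<^sup>2)) (\<sigma> (-(x * y + y * z + z * x))) (\<sigma> (z\<^sup>2))
        = \<sigma> (y\<^sup>2 + z\<^sup>2 + y * z - x * y - x * z)"
    and "circumcenter (\<sigma> (y\<^sup>2 + z\<^sup>2 + y * z - x * y - x * z)) (\<sigma> (y\<^sup>2)) (\<sigma> (z\<^sup>2))
        = \<sigma> (y\<^sup>2 + z\<^sup>2 + y * z)"
    and "circumcenter (\<sigma> (x\<^sup>2)) (\<sigma> (z\<^sup>2 + x\<^sup>2 + z * x - y * z - y * x))
        (\<sigma> (x\<^sup>2 + y\<^sup>2 + x * y - z * x - z * y)) = \<sigma> (x\<^sup>2 - x * y - x * z - 2 * y * z)"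
proof -
  have "R \<noteq> 0"
    using assms(1) by simp
  note circumcenter = circumcenter_similarity[OF this] and orthocenter = orthocenter_similarity[OF this]
  show "incenter (\<sigma> (x\<^sup>2)) (\<sigma> (y\<^sup>2)) (\<sigma> (z\<^sup>2)) = \<sigma> (-(x * y + y * z + z * x))"
    unfolding \<sigma>_def incenter_similarity[OF assms(1) distinct_squares(3)] incenter_eq ..
  show "orthocenter (\<sigma> (x\<^sup>2)) (\<sigma> (y\<^sup>2)) (\<sigma> (z\<^sup>2)) = \<sigma> (x\<^sup>2 + y\<^sup>2 + z\<^sup>2)"
    unfolding \<sigma>_def orthocenter[OF not_collinear_vertices] orthocenter_vertices ..
  show "orthocenter (\<sigma> (y\<^sup>2)) (\<sigma> (-(x * y + y * z + z * x))) (\<sigma> (z\<^sup>2))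
        = \<sigma> (y\<^sup>2 + z\<^sup>2 + y * z - x * y - x * z)"
    unfolding \<sigma>_def orthocenter[OF not_collinear_B_I_C] orthocenter_B_I_C ..
  show "circumcenter (\<sigma> (y\<^sup>2 + z\<^sup>2 + y * z - x * y - x * z)) (\<sigma> (y\<^sup>2)) (\<sigma> (z\<^sup>2))
        = \<sigma> (y\<^sup>2 + z\<^sup>2 + y * z)"
    unfolding \<sigma>_def circumcenter[OF not_collinear_HA_B_C] circumcenter_HA_B_C ..
  show "circumcenter (\<sigma> (x\<^sup>2)) (\<sigma> (z\<^sup>2 + x\<^sup>2 + z * x - y * z - y * x))
        (\<sigma> (x\<^sup>2 + y\<^sup>2 + x * y - z * x - z * y)) = \<sigma> (x\<^sup>2 - x * y - x * z - 2 * y * z)"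
    unfolding \<sigma>_def circumcenter[OF not_collinear_A_HB_HC] circumcenter_A_HB_HC ..
qed

end

lemma unit_square_root_on_circle:
  fixes c q :: complex and r :: real
  assumes "dist c q = r" and "r > 0"
  obtains u where "cmod u = 1" and "q = c + of_real r * u\<^sup>2"
proof
  define u where "u = csqrt ((q - c) / of_real r)"
  show "cmod u = 1"
    using assms by (simp add: u_def norm_divide dist_norm norm_minus_commute)
  show "q = c + of_real r * u\<^sup>2"
    using assms(2) by (simp add: u_def)
qed

lemma sign_change_triangle_square_roots:
  fixes x y z :: complex
  assumes "cmod x = 1" "cmod y = 1" "cmod z = 1"
    and "Im (y * cnj z) \<noteq> 0" "Im (z * cnj x) \<noteq> 0" "Im (x * cnj y) \<noteq> 0"
  obtains x' z' where "x'\<^sup>2 = x\<^sup>2" "z'\<^sup>2 = z\<^sup>2" "triangle_square_roots x' y z'"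
proof
  define t1 t2 t3 where "t1 = Im (y * cnj z)" and "t2 = Im (z * cnj x)" and "t3 = Im (x * cnj y)"
  have nonzero: "t1 \<noteq> 0" "t2 \<noteq> 0" "t3 \<noteq> 0"
    using assms(4-6) unfolding t1_def t2_def t3_def .
  \<comment> \<open>negating x changes the signs of t2 and t3, negating z those of t1 and t2\<close>
  define \<epsilon> \<delta> where "\<epsilon> = sgn (t1 * t2)" and "\<delta> = sgn (t2 * t3)"
  have signs: "\<epsilon> * \<epsilon> = 1" "\<delta> * \<delta> = 1" "\<bar>\<epsilon>\<bar> = 1" "\<bar>\<delta>\<bar> = 1"
    using nonzero by (simp_all add: \<epsilon>_def \<delta>_def)
  show "(of_real \<epsilon> * x)\<^sup>2 = x\<^sup>2" "(of_real \<delta> * z)\<^sup>2 = z\<^sup>2"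
    using signs by (simp_all add: power2_eq_square algebra_simps flip: of_real_mult)
  have Im_scaled: "Im (y * cnj (of_real \<delta> * z)) = \<delta> * t1"
    "Im (of_real \<delta> * z * cnj (of_real \<epsilon> * x)) = \<delta> * \<epsilon> * t2"
    "Im (of_real \<epsilon> * x * cnj y) = \<epsilon> * t3"
    by (simp_all add: t1_def t2_def t3_def algebra_simps)
  have "(\<delta> * t1) * (\<delta> * \<epsilon> * t2) = (\<delta> * \<delta>) * \<bar>t1 * t2\<bar>"
    "(\<delta> * \<epsilon> * t2) * (\<epsilon> * t3) = (\<epsilon> * \<epsilon>) * \<bar>t2 * t3\<bar>"
    unfolding \<epsilon>_def \<delta>_def abs_sgn by (simp_all only: ac_simps)
  then have "0 < (\<delta> * t1) * (\<delta> * \<epsilon> * t2)" "0 < (\<delta> * \<epsilon> * t2) * (\<epsilon> * t3)"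
    using signs(1,2) nonzero by simp_all
  moreover have "(0 < a \<and> 0 < b \<and> 0 < c) \<or> (a < 0 \<and> b < 0 \<and> c < 0)"
    if "0 < a * b" "0 < b * c" for a b c :: real
    using that by (auto simp: zero_less_mult_iff)
  ultimately have "(0 < \<delta> * t1 \<and> 0 < \<delta> * \<epsilon> * t2 \<and> 0 < \<epsilon> * t3)
      \<or> (\<delta> * t1 < 0 \<and> \<delta> * \<epsilon> * t2 < 0 \<and> \<epsilon> * t3 < 0)"
    by blast
  then show "triangle_square_roots (of_real \<epsilon> * x) y (of_real \<delta> * z)"
    unfolding triangle_square_roots_def Im_scaled
    using assms(1-3) signs by (simp only: norm_mult norm_of_real mult_1_left simp_thms)
qed

lemma triangle_square_roots_coordinates:
  fixes A B C :: complex
  assumes "\<not> collinear {A, B, C}"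
  obtains P x y z :: complex and R :: real
  where "0 < R" "triangle_square_roots x y z"
    "A = P + of_real R * x\<^sup>2" "B = P + of_real R * y\<^sup>2" "C = P + of_real R * z\<^sup>2"
proof -
  define P R where "P = circumcenter A B C" and "R = dist P A"
  have on_circle: "dist P A = R" "dist P B = R" "dist P C = R"
    using circumcenter_equidistant[OF assms] by (simp_all add: P_def R_def)
  have "A \<noteq> B" "B \<noteq> C" "C \<noteq> A"
    using assms by (auto simp: insert_commute)
  then have "0 < R"
    using on_circle by (metis dist_eq_0_iff zero_less_dist_iff)
  then obtain x0 y0 z0 where unit: "cmod x0 = 1" "cmod y0 = 1" "cmod z0 = 1"
    and coords: "A = P + of_real R * x0\<^sup>2" "B = P + of_real R * y0\<^sup>2" "C = P + of_real R * z0\<^sup>2"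
    using unit_square_root_on_circle on_circle by metis
  have Im_nonzero: "Im (u * cnj v) \<noteq> 0"
    if "cmod u = 1" "cmod v = 1" "P + of_real R * u\<^sup>2 \<noteq> P + of_real R * v\<^sup>2" for u v
    using that dist_power2_unit[OF that(1,2)] by auto
  obtain x z where "x\<^sup>2 = x0\<^sup>2" "z\<^sup>2 = z0\<^sup>2" "triangle_square_roots x y0 z"
    using sign_change_triangle_square_roots[OF unit] Im_nonzero unit coords \<open>A \<noteq> B\<close> \<open>B \<noteq> C\<close> \<open>C \<noteq> A\<close>
    by metis
  then show thesis
    using that \<open>0 < R\<close> coords by metis
qed

theorem theorem5p2:
  fixes A B C I H H\<^sub>A H\<^sub>B H\<^sub>C Oa Ob Oc OA OB OC :: complex
  assumes tri: "\<not> collinear {A, B, C}"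
      and "I = incenter A B C"
      and "H = orthocenter A B C"
      and "H\<^sub>A = orthocenter B I C"
      and "H\<^sub>B = orthocenter C I A"
      and "H\<^sub>C = orthocenter A I B"
      and "Oa = circumcenter H\<^sub>A B C"
      and "Ob = circumcenter H\<^sub>B C A"
      and "Oc = circumcenter H\<^sub>C B A"
      and "OA = circumcenter A H\<^sub>B H\<^sub>C"
      and "OB = circumcenter B H\<^sub>C H\<^sub>A"
      and "OC = circumcenter C H\<^sub>A H\<^sub>B"
  shows "OA = point_reflection (midpoint H I) Oa
       \<and> OB = point_reflection (midpoint H I) Ob
       \<and> OC = point_reflection (midpoint H I) Oc"
proof -
  obtain P x y z :: complex and R :: real where "0 < R" and "triangle_square_roots x y z"
    and A: "A = P + of_real R * x\<^sup>2" and B: "B = P + of_real R * y\<^sup>2" and C: "C = P + of_real R * z\<^sup>2"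
    using triangle_square_roots_coordinates[OF tri] by metis
  interpret triangle_square_roots x y z by fact
  interpret yzx: triangle_square_roots y z x by (rule rotate)
  interpret zxy: triangle_square_roots z x y by (rule yzx.rotate)
  note copy = similar_copy[OF \<open>0 < R\<close>, of P] yzx.similar_copy[OF \<open>0 < R\<close>, of P]
    zxy.similar_copy[OF \<open>0 < R\<close>, of P]
  have I: "I = P + of_real R * -(x * y + y * z + z * x)"
    unfolding assms(2) A B C copy ..
  have "-(x * y + y * z + z * x) = -(y * z + z * x + x * y)"
    "-(x * y + y * z + z * x) = -(z * x + x * y + y * z)"
    by (simp_all add: algebra_simps)
  note I_rotated = I[unfolded this(1)] I[unfolded this(2)]
  have H\<^sub>A: "H\<^sub>A = P + of_real R * (y\<^sup>2 + z\<^sup>2 + y * z - x * y - x * z)"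
    unfolding assms(4) B C I copy ..
  have H\<^sub>B: "H\<^sub>B = P + of_real R * (z\<^sup>2 + x\<^sup>2 + z * x - y * z - y * x)"
    unfolding assms(5) C A I_rotated(1) copy ..
  have H\<^sub>C: "H\<^sub>C = P + of_real R * (x\<^sup>2 + y\<^sup>2 + x * y - z * x - z * y)"
    unfolding assms(6) A B I_rotated(2) copy ..
  show ?thesis
    unfolding assms(3,7,8,10-12) assms(9)[unfolded circumcenter_swap_last[of H\<^sub>C B A]]
      A B C I H\<^sub>A H\<^sub>B H\<^sub>C copy
      point_reflection_def midpoint_def scaleR_conv_of_real
    by (simp add: algebra_simps power2_eq_square)
qed

end
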